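(* If $\alpha,\beta\in\Omega$ are the critical itineraries of an overlapping function, i.e. there exist $a\in(1,2]$ and $p\in[1-1/a,1/a]$ with $\alpha=\tau_{(a,p,-)}(p)$ and $\beta=\tau_{(a,p,+)}(p)$, then $(\alpha,\beta)$ is an admissible, non-null pair.
   Context: For $1<a\le 2$ and $1-\frac1a\le p\le\frac1a$: $f_{(a,p,-)}(x)=ax$ if $x\le p$, $ax+(1-a)$ if $x>p$; $f_{(a,p,+)}(x)=ax$ if $x<p$, $ax+(1-a)$ if $x\ge p$, on $[0,1]$. $\Omega=\{0,1\}^{\infty}$ is the set of infinite binary strings $\omega_0\omega_1\cdots$. For $f_{(a,p,-)}$ let $I_0=[0,p]$, $I_1=(p,1]$; for $f_{(a,p,+)}$ let $I_0=[0,p)$, $I_1=[p,1]$. The itinerary $\tau_{(a,p,\pm)}(x)=\omega$ has $\omega_n=0$ if $f_{(a,p,\pm)}^n(x)\in I_0$ and $\omega_n=1$ if it lies in $I_1$. $S$ is the left shift on $\Omega$, $\preceq$ the lexicographic order, with intervals $[\alpha,\beta]=\{\omega:\alpha\preceq\omega\preceq\beta\}$ etc. A pair $(\alpha,\beta)$ is admissible if $\alpha_0=0,\alpha_1=1,\beta_0=1,\beta_1=0$, and $S^n\alpha\notin(\alpha,\beta]$, $S^n\beta\notin[\alpha,\beta)$ for all $n\ge0$. Then $\Omega_{(\alpha,\beta,-)}=\{\omega:S^n\omega\notin(\alpha,\beta]\ \forall n\ge 0\}$, $\Omega_{(\alpha,\beta,+)}=\{\omega:S^n\omega\notin[\alpha,\beta)\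 \forall n\ge 0\}$, $\Omega_{(\alpha,\beta)}$ their union. For $\Gamma\subseteq\Omega$, $\Gamma_n=\{\omega_0\cdots\omega_n:\omega\in\Gamma\}$ and $h(\Gamma)=\limsup_n\frac1n\ln|\Gamma_n|$. The admissible pair is null if $h(\Omega_{(\alpha,\beta)})=0$, non-null otherwise. *)

theory Defs
  imports "HOL-Analysis.Analysis"
begin

definition Omega :: "(nat \<Rightarrow> nat) set" where
  "Omega = {\<omega>. \<forall>n. \<omega> n \<in> {0, 1}}"

definition f_minus :: "real \<Rightarrow> real \<Rightarrow> real \<Rightarrow> real" where
  "f_minus a p x = (if x \<le> p then a * x else a * x + (1 - a))"

definition f_plus :: "real \<Rightarrow> real \<Rightarrow> real \<Rightarrow> real" where
  "f_plus a p x = (if x < p then a * x else a * x + (1 - a))"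

definition itin_minus :: "real \<Rightarrow> real \<Rightarrow> real \<Rightarrow> nat \<Rightarrow> nat" where
  "itin_minus a p x n = (let y = (f_minus a p ^^ n) x in
      if 0 \<le> y \<and> y \<le> p then 0 else if p < y \<and> y \<le> 1 then 1 else undefined)"

definition itin_plus :: "real \<Rightarrow> real \<Rightarrow> real \<Rightarrow> nat \<Rightarrow> nat" where
  "itin_plus a p x n = (let y = (f_plus a p ^^ n) x in
      if 0 \<le> y \<and> y < p then 0 else if p \<le> y \<and> y \<le> 1 then 1 else undefined)"

definition shift :: "(nat \<Rightarrow> nat) \<Rightarrow> nat \<Rightarrow> nat" where
  "shift \<omega> = (\<lambda>n. \<omega> (Suc n))"

definition lex_less :: "(nat \<Rightarrow> nat) \<Rightarrow> (nat \<Rightarrow> nat) \<Rightarrow> bool" where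
  "lex_less \<omega> \<eta> = (\<exists>n. (\<forall>k<n. \<omega> k = \<eta> k) \<and> \<omega> n < \<eta> n)"

definition lex_le :: "(nat \<Rightarrow> nat) \<Rightarrow> (nat \<Rightarrow> nat) \<Rightarrow> bool" where
  "lex_le \<omega> \<eta> = (lex_less \<omega> \<eta> \<or> \<omega> = \<eta>)"

definition ival_oc :: "(nat \<Rightarrow> nat) \<Rightarrow> (nat \<Rightarrow> nat) \<Rightarrow> (nat \<Rightarrow> nat) set" where
  "ival_oc \<alpha> \<beta> = {\<omega> \<in> Omega. lex_less \<alpha> \<omega> \<and> lex_le \<omega> \<beta>}"

definition ival_co :: "(nat \<Rightarrow> nat) \<Rightarrow> (nat \<Rightarrow> nat) \<Rightarrow> (nat \<Rightarrow> nat) set" where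
  "ival_co \<alpha> \<beta> = {\<omega> \<in> Omega. lex_le \<alpha> \<omega> \<and> lex_less \<omega> \<beta>}"

definition admissible :: "(nat \<Rightarrow> nat) \<Rightarrow> (nat \<Rightarrow> nat) \<Rightarrow> bool" where
  "admissible \<alpha> \<beta> = (\<alpha> \<in> Omega \<and> \<beta> \<in> Omega \<and>
     \<alpha> 0 = 0 \<and> \<alpha> 1 = 1 \<and> \<beta> 0 = 1 \<and> \<beta> 1 = 0 \<and>
     (\<forall>n. (shift ^^ n) \<alpha> \<notin> ival_oc \<alpha> \<beta>) \<and>
     (\<forall>n. (shift ^^ n) \<beta> \<notin> ival_co \<alpha> \<beta>))"

definition Omega_minus :: "(nat \<Rightarrow> nat) \<Rightarrow> (nat \<Rightarrow> nat) \<Rightarrow> (nat \<Rightarrow> nat) set" where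
  "Omega_minus \<alpha> \<beta> = {\<omega> \<in> Omega. \<forall>n. (shift ^^ n) \<omega> \<notin> ival_oc \<alpha> \<beta>}"

definition Omega_plus :: "(nat \<Rightarrow> nat) \<Rightarrow> (nat \<Rightarrow> nat) \<Rightarrow> (nat \<Rightarrow> nat) set" where
  "Omega_plus \<alpha> \<beta> = {\<omega> \<in> Omega. \<forall>n. (shift ^^ n) \<omega> \<notin> ival_co \<alpha> \<beta>}"

definition Omega_ab :: "(nat \<Rightarrow> nat) \<Rightarrow> (nat \<Rightarrow> nat) \<Rightarrow> (nat \<Rightarrow> nat) set" where
  "Omega_ab \<alpha> \<beta> = Omega_minus \<alpha> \<beta> \<union> Omega_plus \<alpha> \<beta>"

definition words :: "(nat \<Rightarrow> nat) set \<Rightarrow> nat \<Rightarrow> nat list set" where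
  "words \<Gamma> n = (\<lambda>\<omega>. map \<omega> [0..<Suc n]) ` \<Gamma>"

definition entropy :: "(nat \<Rightarrow> nat) set \<Rightarrow> ereal" where
  "entropy \<Gamma> = limsup (\<lambda>n. ereal (ln (real (card (words \<Gamma> n))) / real n))"

definition null_pair :: "(nat \<Rightarrow> nat) \<Rightarrow> (nat \<Rightarrow> nat) \<Rightarrow> bool" where
  "null_pair \<alpha> \<beta> = (entropy (Omega_ab \<alpha> \<beta>) = 0)"

end

theory Submission
  imports Defs
begin

text \<open>Both branches of an overlapping map multiply distances by \<open>a > 1\<close>, so two orbits whose
  itineraries agree for \<open>n\<close> steps are \<open>a\<^sup>n\<close> times as far apart as their starting points. Since
  orbits stay in \<open>[0,1]\<close>, itineraries are strictly monotone in the starting point, and the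
  itineraries of \<open>p\<close> bound all itineraries from both sides; this gives admissibility. The same
  expansion shows that \<open>\<lceil>a\<^sup>n\<^sup>+\<^sup>1\<rceil>\<close> equally spaced points of \<open>[0,1]\<close> have pairwise distinct
  words of length \<open>n+1\<close>, so the entropy is at least \<open>ln a > 0\<close>.\<close>

lemma lex_le_imp_not_lex_less: "lex_le \<omega> \<eta> \<Longrightarrow> \<not> lex_less \<eta> \<omega>"
  unfolding lex_le_def lex_less_def
  by (metis less_irrefl linorder_neqE_nat less_asym')

lemma funpow_shift: "(shift ^^ n) \<omega> = (\<lambda>k. \<omega> (k + n))"
  by (induction n) (auto simp: shift_def)

lemma finite_words: "\<Gamma> \<subseteq> Omega \<Longrightarrow> finite (words \<Gamma> n)"
proof (rule finite_subset)
  assume "\<Gamma> \<subseteq> Omega"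
  then have "set (map \<omega> [0..<Suc n]) \<subseteq> {0, 1}" if "\<omega> \<in> \<Gamma>" for \<omega>
    using that unfolding Omega_def by force
  then show "words \<Gamma> n \<subseteq> {xs. set xs \<subseteq> {0, 1} \<and> length xs = Suc n}"
    unfolding words_def by (auto simp del: upt_Suc set_map)
  show "finite {xs. set xs \<subseteq> {0::nat, 1} \<and> length xs = Suc n}"
    by (rule finite_lists_length_eq) simp
qed

lemma gap_eq_power_if_symbols_agree:
  fixes u v :: "nat \<Rightarrow> real" and su sv :: "nat \<Rightarrow> nat"
  assumes step: "\<And>n. su n = sv n \<Longrightarrow> v (Suc n) - u (Suc n) = a * (v n - u n)"
    and agree: "\<forall>k<n. su k = sv k"
  shows "v n - u n = a ^ n * (v 0 - u 0)"
  using agree by (induction n) (simp_all add: step)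

lemma lex_less_if_gap_expands:
  fixes u v :: "nat \<Rightarrow> real" and su sv :: "nat \<Rightarrow> nat"
  assumes unit: "\<And>n. u n \<in> {0..1} \<and> v n \<in> {0..1}"
    and step: "\<And>n. su n = sv n \<Longrightarrow> v (Suc n) - u (Suc n) = a * (v n - u n)"
    and ord: "\<And>n. u n < v n \<Longrightarrow> su n \<le> sv n"
    and start: "u 0 < v 0" and a: "1 < a"
  shows "lex_less su sv"
proof (rule ccontr)
  assume not_less: "\<not> lex_less su sv"
  have agree: "\<forall>k<n. su k = sv k" for n
  proof (induction n)
    case (Suc n)
    have "0 < v n - u n"
      using gap_eq_power_if_symbols_agree[where su=su and sv=sv and u=u and v=v, OF step Suc.IH]
        a start by simp
    then have "su n \<le> sv n" using ord by simp
    moreover have "\<not> su n < sv n" using not_less Suc.IH unfolding lex_less_def by blast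
    ultimately show ?case using Suc.IH less_Suc_eq by auto
  qed simp
  obtain n where "1 / (v 0 - u 0) < a ^ n" using real_arch_pow[OF a] by blast
  then have "1 < a ^ n * (v 0 - u 0)" using start by (simp add: field_simps)
  also have "\<dots> = v n - u n"
    using gap_eq_power_if_symbols_agree[where su=su and sv=sv and u=u and v=v, OF step agree]
    by (rule sym)
  finally show False using unit[of n] by auto
qed

locale overlapping_map =
  fixes a p :: real
  assumes a_gt_1: "1 < a"
    and p_ge: "1 - 1 / a \<le> p" and p_le: "p \<le> 1 / a"
begin

lemma p_in_unit: "0 < p" "p < 1"
  using p_ge p_le a_gt_1 by (smt (verit) divide_less_eq_1_pos)+

lemma ap_bounds: "a * p \<le> 1" "a - 1 \<le> a * p"
  using p_le p_ge a_gt_1 by (simp_all add: field_simps)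

lemma branches_in_unit:
  assumes "x \<in> {0..1}"
  shows "x \<le> p \<Longrightarrow> a * x \<in> {0..1}" and "p \<le> x \<Longrightarrow> a * x + (1 - a) \<in> {0..1}"
proof -
  have "a * x \<le> a" "0 \<le> a * x" using assms a_gt_1 by auto
  moreover have "x \<le> p \<Longrightarrow> a * x \<le> a * p" "p \<le> x \<Longrightarrow> a * p \<le> a * x"
    using a_gt_1 by simp_all
  ultimately show "x \<le> p \<Longrightarrow> a * x \<in> {0..1}" "p \<le> x \<Longrightarrow> a * x + (1 - a) \<in> {0..1}"
    using ap_bounds by auto
qed

lemma f_minus_in_unit: "x \<in> {0..1} \<Longrightarrow> f_minus a p x \<in> {0..1}"
  using branches_in_unit unfolding f_minus_def by (simp del: atLeastAtMost_iff)

lemma f_plus_in_unit: "x \<in> {0..1} \<Longrightarrow> f_plus a p x \<in> {0..1}"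
  using branches_in_unit unfolding f_plus_def by (simp del: atLeastAtMost_iff)

lemma funpow_f_minus_in_unit: "x \<in> {0..1} \<Longrightarrow> (f_minus a p ^^ n) x \<in> {0..1}"
  by (induction n) (auto intro!: f_minus_in_unit simp del: atLeastAtMost_iff)

lemma funpow_f_plus_in_unit: "x \<in> {0..1} \<Longrightarrow> (f_plus a p ^^ n) x \<in> {0..1}"
  by (induction n) (auto intro!: f_plus_in_unit simp del: atLeastAtMost_iff)

lemma itin_minus_eq:
  "x \<in> {0..1} \<Longrightarrow> itin_minus a p x n = (if (f_minus a p ^^ n) x \<le> p then 0 else 1)"
  using funpow_f_minus_in_unit[of x n] unfolding itin_minus_def Let_def by auto

lemma itin_plus_eq:
  "x \<in> {0..1} \<Longrightarrow> itin_plus a p x n = (if (f_plus a p ^^ n) x < p then 0 else 1)"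
  using funpow_f_plus_in_unit[of x n] unfolding itin_plus_def Let_def by auto

lemma shift_itin_minus: "(shift ^^ n) (itin_minus a p x) = itin_minus a p ((f_minus a p ^^ n) x)"
  unfolding funpow_shift itin_minus_def by (simp add: funpow_add)

lemma shift_itin_plus: "(shift ^^ n) (itin_plus a p x) = itin_plus a p ((f_plus a p ^^ n) x)"
  unfolding funpow_shift itin_plus_def by (simp add: funpow_add)

lemma itin_minus_in_Omega: "x \<in> {0..1} \<Longrightarrow> itin_minus a p x \<in> Omega"
  unfolding Omega_def using itin_minus_eq by auto

lemma itin_plus_in_Omega: "x \<in> {0..1} \<Longrightarrow> itin_plus a p x \<in> Omega"
  unfolding Omega_def using itin_plus_eq by auto

text \<open>The hypothesis of \<open>f_minus_f_plus_gap\<close> says that \<open>x\<close> has the same minus-symbol as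
  \<open>y\<close> has plus-symbol.\<close>

lemma f_minus_gap: "(x \<le> p) = (y \<le> p) \<Longrightarrow> f_minus a p y - f_minus a p x = a * (y - x)"
  by (cases "x \<le> p") (simp_all add: f_minus_def algebra_simps)

lemma f_plus_gap: "(x < p) = (y < p) \<Longrightarrow> f_plus a p y - f_plus a p x = a * (y - x)"
  by (cases "x < p") (simp_all add: f_plus_def algebra_simps)

lemma f_minus_f_plus_gap: "(y < p) = (x \<le> p) \<Longrightarrow> f_minus a p x - f_plus a p y = a * (x - y)"
  by (cases "x \<le> p") (simp_all add: f_plus_def f_minus_def algebra_simps)

lemma itin_minus_strict_mono:
  assumes "x \<in> {0..1}" "y \<in> {0..1}" "x < y"
  shows "lex_less (itin_minus a p x) (itin_minus a p y)"
proof (rule lex_less_if_gap_expands[where u="\<lambda>n. (f_minus a p ^^ n) x"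
      and v="\<lambda>n. (f_minus a p ^^ n) y" and a=a])
  fix n
  show "(f_minus a p ^^ Suc n) y - (f_minus a p ^^ Suc n) x
      = a * ((f_minus a p ^^ n) y - (f_minus a p ^^ n) x)"
    if "itin_minus a p x n = itin_minus a p y n"
    using that f_minus_gap itin_minus_eq[OF assms(1)] itin_minus_eq[OF assms(2)]
    by (simp split: if_splits)
qed (use assms a_gt_1 funpow_f_minus_in_unit itin_minus_eq in auto)

lemma itin_plus_strict_mono:
  assumes "x \<in> {0..1}" "y \<in> {0..1}" "x < y"
  shows "lex_less (itin_plus a p x) (itin_plus a p y)"
proof (rule lex_less_if_gap_expands[where u="\<lambda>n. (f_plus a p ^^ n) x"
      and v="\<lambda>n. (f_plus a p ^^ n) y" and a=a])
  fix n
  show "(f_plus a p ^^ Suc n) y - (f_plus a p ^^ Suc n) x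
      = a * ((f_plus a p ^^ n) y - (f_plus a p ^^ n) x)"
    if "itin_plus a p x n = itin_plus a p y n"
    using that f_plus_gap itin_plus_eq[OF assms(1)] itin_plus_eq[OF assms(2)]
    by (simp split: if_splits)
qed (use assms a_gt_1 funpow_f_plus_in_unit itin_plus_eq in auto)

lemma itin_plus_less_itin_minus:
  assumes "x \<in> {0..1}" "y \<in> {0..1}" "y < x"
  shows "lex_less (itin_plus a p y) (itin_minus a p x)"
proof (rule lex_less_if_gap_expands[where u="\<lambda>n. (f_plus a p ^^ n) y"
      and v="\<lambda>n. (f_minus a p ^^ n) x" and a=a])
  fix n
  show "(f_minus a p ^^ Suc n) x - (f_plus a p ^^ Suc n) y
      = a * ((f_minus a p ^^ n) x - (f_plus a p ^^ n) y)"
    if "itin_plus a p y n = itin_minus a p x n"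
    using that f_minus_f_plus_gap itin_plus_eq[OF assms(2)] itin_minus_eq[OF assms(1)]
    by (simp split: if_splits)
qed (use assms a_gt_1 funpow_f_plus_in_unit funpow_f_minus_in_unit itin_plus_eq itin_minus_eq
     in auto)

lemma itin_minus_notin_ival_oc:
  assumes x: "x \<in> {0..1}"
  shows "itin_minus a p x \<notin> ival_oc (itin_minus a p p) (itin_plus a p p)"
proof
  have p: "p \<in> {0..1}" using p_in_unit by simp
  assume "itin_minus a p x \<in> ival_oc (itin_minus a p p) (itin_plus a p p)"
  then have above: "lex_less (itin_minus a p p) (itin_minus a p x)"
    and below: "lex_le (itin_minus a p x) (itin_plus a p p)" unfolding ival_oc_def by auto
  consider "x \<le> p" | "p < x" by linarith
  then show False
  proof cases
    case 1
    then have "lex_le (itin_minus a p x) (itin_minus a p p)"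
      using itin_minus_strict_mono[OF x p] unfolding lex_le_def by (cases "x = p") auto
    with above show False by (simp add: lex_le_imp_not_lex_less)
  next
    case 2
    with below show False using itin_plus_less_itin_minus[OF x p] lex_le_imp_not_lex_less by blast
  qed
qed

lemma itin_plus_notin_ival_co:
  assumes y: "y \<in> {0..1}"
  shows "itin_plus a p y \<notin> ival_co (itin_minus a p p) (itin_plus a p p)"
proof
  have p: "p \<in> {0..1}" using p_in_unit by simp
  assume "itin_plus a p y \<in> ival_co (itin_minus a p p) (itin_plus a p p)"
  then have above: "lex_le (itin_minus a p p) (itin_plus a p y)"
    and below: "lex_less (itin_plus a p y) (itin_plus a p p)" unfolding ival_co_def by auto
  consider "y < p" | "p \<le> y" by linarith
  then show False
  proof cases
    case 1
    with above show False using itin_plus_less_itin_minus[OF p y] lex_le_imp_not_lex_less by blast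
  next
    case 2
    then have "lex_le (itin_plus a p p) (itin_plus a p y)"
      using itin_plus_strict_mono[OF p y] unfolding lex_le_def by (cases "y = p") auto
    with below show False by (simp add: lex_le_imp_not_lex_less)
  qed
qed

lemma funpow_shift_itin_minus_notin:
  "x \<in> {0..1} \<Longrightarrow> (shift ^^ n) (itin_minus a p x) \<notin> ival_oc (itin_minus a p p) (itin_plus a p p)"
  unfolding shift_itin_minus by (rule itin_minus_notin_ival_oc[OF funpow_f_minus_in_unit])

lemma funpow_shift_itin_plus_notin:
  "y \<in> {0..1} \<Longrightarrow> (shift ^^ n) (itin_plus a p y) \<notin> ival_co (itin_minus a p p) (itin_plus a p p)"
  unfolding shift_itin_plus by (rule itin_plus_notin_ival_co[OF funpow_f_plus_in_unit])

lemma itin_minus_in_Omega_minus: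
  "x \<in> {0..1} \<Longrightarrow> itin_minus a p x \<in> Omega_minus (itin_minus a p p) (itin_plus a p p)"
  unfolding Omega_minus_def by (simp add: itin_minus_in_Omega funpow_shift_itin_minus_notin
      del: atLeastAtMost_iff)

lemma critical_itineraries_admissible: "admissible (itin_minus a p p) (itin_plus a p p)"
proof -
  have p: "p \<in> {0..1}" using p_in_unit by simp
  have "\<not> a * p \<le> p" using a_gt_1 p_in_unit by simp
  moreover have "a * p + (1 - a) < p"
    using mult_strict_left_mono[OF p_in_unit(2), of "a - 1"] a_gt_1 by (simp add: algebra_simps)
  ultimately have "itin_minus a p p 1 = 1" "itin_plus a p p 1 = 0"
    using p_in_unit by (simp_all add: itin_minus_eq[OF p] itin_plus_eq[OF p] f_minus_def f_plus_def)
  moreover have "itin_minus a p p 0 = 0" "itin_plus a p p 0 = 1"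
    by (simp_all add: itin_minus_eq[OF p] itin_plus_eq[OF p])
  ultimately show ?thesis
    unfolding admissible_def
    by (simp add: p itin_minus_in_Omega itin_plus_in_Omega funpow_shift_itin_minus_notin
        funpow_shift_itin_plus_notin del: atLeastAtMost_iff)
qed

lemma itin_minus_separates:
  assumes x: "x \<in> {0..1}" and y: "y \<in> {0..1}" and far: "1 < a ^ Suc n * (y - x)"
  shows "\<exists>k\<le>n. itin_minus a p x k \<noteq> itin_minus a p y k"
proof (rule ccontr)
  assume "\<not> ?thesis"
  then have agree: "\<forall>k<Suc n. itin_minus a p x k = itin_minus a p y k"
    by (simp add: less_Suc_eq_le)
  define u where "u k = (f_minus a p ^^ k) x" for k
  define v where "v k = (f_minus a p ^^ k) y" for k
  have "v (Suc k) - u (Suc k) = a * (v k - u k)" if "itin_minus a p x k = itin_minus a p y k" for k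
    using that f_minus_gap itin_minus_eq[OF x] itin_minus_eq[OF y]
    unfolding u_def v_def by (simp split: if_splits)
  from gap_eq_power_if_symbols_agree[where u=u and v=v, OF this agree]
  have "(f_minus a p ^^ Suc n) y - (f_minus a p ^^ Suc n) x = a ^ Suc n * (y - x)"
    unfolding u_def v_def by simp
  with far funpow_f_minus_in_unit[OF x, of "Suc n"] funpow_f_minus_in_unit[OF y, of "Suc n"]
  show False by auto
qed

lemma card_words_ge_grid:
  assumes m: "1 \<le> m" "real m < a ^ Suc n"
  shows "m + 1 \<le> card (words (Omega_ab (itin_minus a p p) (itin_plus a p p)) n)"
proof -
  define g where "g = (\<lambda>k::nat. map (itin_minus a p (real k / real m)) [0..<Suc n])"
  have grid_in_unit: "real k / real m \<in> {0..1}" if "k \<le> m" for k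
    using that m by (simp add: field_simps)
  have distinct: "g k \<noteq> g l" if kl: "k < l" "l \<le> m" for k l
  proof -
    have "k \<le> m" using kl by simp
    have "1 < a ^ Suc n / real m" using m by (simp add: field_simps)
    also have "\<dots> = a ^ Suc n * (1 / real m)" by simp
    also have "\<dots> \<le> a ^ Suc n * ((real l - real k) / real m)"
      using kl m a_gt_1 by (intro mult_left_mono divide_right_mono) auto
    also have "\<dots> = a ^ Suc n * (real l / real m - real k / real m)"
      by (simp add: diff_divide_distrib)
    finally obtain j where "j \<le> n"
      "itin_minus a p (real k / real m) j \<noteq> itin_minus a p (real l / real m) j"
      using itin_minus_separates[OF grid_in_unit[OF \<open>k \<le> m\<close>] grid_in_unit[OF kl(2)]] by blast
    moreover have "g k ! j = itin_minus a p (real k / real m) j"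
      "g l ! j = itin_minus a p (real l / real m) j"
      using \<open>j \<le> n\<close> unfolding g_def by (simp_all add: less_Suc_eq_le del: upt_Suc)
    ultimately show ?thesis by metis
  qed
  have "inj_on g {0..m}"
    unfolding inj_on_def by (metis atLeastAtMost_iff distinct linorder_neqE_nat)
  moreover have "g ` {0..m} \<subseteq> words (Omega_ab (itin_minus a p p) (itin_plus a p p)) n"
  proof (rule image_subsetI)
    fix k assume "k \<in> {0..m}"
    then have "itin_minus a p (real k / real m) \<in> Omega_ab (itin_minus a p p) (itin_plus a p p)"
      using itin_minus_in_Omega_minus grid_in_unit unfolding Omega_ab_def by simp
    then show "g k \<in> words (Omega_ab (itin_minus a p p) (itin_plus a p p)) n"
      unfolding words_def g_def by (rule imageI)
  qed
  moreover have "finite (words (Omega_ab (itin_minus a p p) (itin_plus a p p)) n)"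
    by (rule finite_words) (auto simp: Omega_ab_def Omega_minus_def Omega_plus_def)
  ultimately show ?thesis using card_mono[of _ "g ` {0..m}"] card_image[of g] by simp
qed

lemma card_words_ge:
  "a ^ Suc n \<le> real (card (words (Omega_ab (itin_minus a p p) (itin_plus a p p)) n))"
proof -
  define m where "m = nat \<lceil>a ^ Suc n\<rceil> - 1"
  have "1 < a ^ Suc n" using one_less_power[OF a_gt_1] by blast
  then have "1 \<le> m" "real m < a ^ Suc n" "a ^ Suc n \<le> real m + 1"
    unfolding m_def by (linarith, linarith, linarith)
  then show ?thesis using card_words_ge_grid[of m n] by linarith
qed

lemma entropy_ge_ln: "ereal (ln a) \<le> entropy (Omega_ab (itin_minus a p p) (itin_plus a p p))"
  unfolding entropy_def
proof (rule le_Limsup)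
  show "\<forall>\<^sub>F n in sequentially. ereal (ln a)
      \<le> ereal (ln (real (card (words (Omega_ab (itin_minus a p p) (itin_plus a p p)) n))) / real n)"
    unfolding eventually_sequentially
  proof (intro exI allI impI)
    fix n :: nat assume "1 \<le> n"
    let ?c = "real (card (words (Omega_ab (itin_minus a p p) (itin_plus a p p)) n))"
    have "real n * ln a \<le> real (Suc n) * ln a" using a_gt_1 by simp
    also have "\<dots> = ln (a ^ Suc n)" using ln_realpow[of a "Suc n"] a_gt_1 by simp
    also have "\<dots> \<le> ln ?c" using card_words_ge a_gt_1 by (intro ln_mono) auto
    finally show "ereal (ln a) \<le> ereal (ln ?c / real n)"
      using \<open>1 \<le> n\<close> by (simp add: le_divide_eq mult.commute)
  qed
qed simp

end

theorem theorem2: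
  fixes a p :: real and \<alpha> \<beta> :: "nat \<Rightarrow> nat"
  assumes "1 < a" "a \<le> 2" "1 - 1 / a \<le> p" "p \<le> 1 / a"
    and "\<alpha> = itin_minus a p p" and "\<beta> = itin_plus a p p"
  shows "admissible \<alpha> \<beta> \<and> \<not> null_pair \<alpha> \<beta>"
proof -
  interpret overlapping_map a p using assms(1,3,4) by unfold_locales
  have "0 < ln a" using assms(1) by simp
  then have "entropy (Omega_ab \<alpha> \<beta>) \<noteq> 0"
    using entropy_ge_ln assms(5,6) by auto
  then show ?thesis
    using critical_itineraries_admissible assms(5,6) unfolding null_pair_def by simp
qed

end
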